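(* Let $|\psi_{{\sf A}{\sf B}}\rangle\in\mathbb C^{d_{\sf A}}\otimes\mathbb C^{d_{\sf B}}$ be a unit vector and $\bar\omega_{\sf A}=\mathrm{tr}_{\sf B}\big(S_{\sf B}|\psi_{{\sf A}{\sf B}}\rangle\langle\psi_{{\sf A}{\sf B}}|^{\otimes2}\big)+\frac{S_{\sf A}}{\mathrm{tr}S_{\sf A}}\,\mathrm{tr}\big(A_{\sf A}A_{\sf B}|\psi_{{\sf A}{\sf B}}\rangle\langle\psi_{{\sf A}{\sf B}}|^{\otimes2}\big)$. Then $\bar\omega_{\sf A}$ belongs to the convex hull of $\{|\phi\rangle\langle\phi|^{\otimes2}:\phi\in\mathbb C^{d_{\sf A}},\ \|\phi\|=1\}$.
   Context: $|\psi_{{\sf A}{\sf B}}\rangle^{\otimes2}$ is regarded as a vector in $\mathbb C^{d_{\sf A}}_1\otimes\mathbb C^{d_{\sf B}}_2\otimes\mathbb C^{d_{\sf A}}_3\otimes\mathbb C^{d_{\sf B}}_4$; $\mathrm{tr}_{\sf B}$ is the partial trace over factors $2,4$. $S_{\sf A}$, $A_{\sf A}$ are the projectors onto the symmetric and antisymmetric subspaces of $\mathbb C^{d_{\sf A}}_1\otimes\mathbb C^{d_{\sf A}}_3$; $S_{\sf B}$, $A_{\sf B}$ those of $\mathbb C^{d_{\sf B}}_2\otimes\mathbb C^{d_{\sf B}}_4$ (extended by identities where needed). *)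

theory Defs
  imports "HOL-Analysis.Analysis"
begin

text \<open>Vectors in C^dA (x) C^dB are elements of complex ^ ('a * 'b), with finite index
types 'a (basis of C^dA) and 'b (basis of C^dB).  Operators on C^dA (x) C^dA
(factors 1,3) are matrices complex ^ ('a * 'a) ^ ('a * 'a); the entry
M $ (i,k) $ (i',k') is the matrix element <i k| M |i' k'>.\<close>

definition sym_proj :: "('x \<times> 'x) \<Rightarrow> ('x \<times> 'x) \<Rightarrow> complex" where
  "sym_proj r c = ((if r = c then 1 else 0) + (if r = (snd c, fst c) then 1 else 0)) / 2"

definition antisym_proj :: "('x \<times> 'x) \<Rightarrow> ('x \<times> 'x) \<Rightarrow> complex" where
  "antisym_proj r c = ((if r = c then 1 else 0) - (if r = (snd c, fst c) then 1 else 0)) / 2"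

text \<open>Components of |psi><psi|^{(x)2} in C^dA_1 (x) C^dB_2 (x) C^dA_3 (x) C^dB_4:
psi2 psi (i,j,k,l) = psi_{ij} psi_{kl}.\<close>
definition psi2 :: "complex ^ ('a::finite \<times> 'b::finite) \<Rightarrow> 'a \<Rightarrow> 'b \<Rightarrow> 'a \<Rightarrow> 'b \<Rightarrow> complex" where
  "psi2 psi i j k l = psi $ (i, j) * psi $ (k, l)"

definition rho2 :: "complex ^ ('a::finite \<times> 'b::finite) \<Rightarrow> 'a \<Rightarrow> 'b \<Rightarrow> 'a \<Rightarrow> 'b \<Rightarrow>
                     'a \<Rightarrow> 'b \<Rightarrow> 'a \<Rightarrow> 'b \<Rightarrow> complex" where
  "rho2 psi i j k l i' j' k' l' = psi2 psi i j k l * cnj (psi2 psi i' j' k' l')"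

text \<open>tr_B (S_B rho): an operator on factors 1,3.\<close>
definition trB_SB :: "complex ^ ('a::finite \<times> 'b::finite) \<Rightarrow> complex ^ ('a \<times> 'a) ^ ('a \<times> 'a)" where
  "trB_SB psi = (\<chi> r c. \<Sum>j\<in>UNIV. \<Sum>l\<in>UNIV. \<Sum>j'\<in>UNIV. \<Sum>l'\<in>UNIV.
      sym_proj (j, l) (j', l') * rho2 psi (fst r) j' (snd r) l' (fst c) j (snd c) l)"

text \<open>tr (A_A A_B rho), where A_A acts on factors 1,3 and A_B on factors 2,4.\<close>
definition tr_AA_AB :: "complex ^ ('a::finite \<times> 'b::finite) \<Rightarrow> complex" where
  "tr_AA_AB psi = (\<Sum>i\<in>UNIV. \<Sum>j\<in>UNIV. \<Sum>k\<in>UNIV. \<Sum>l\<in>UNIV.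
      \<Sum>i'\<in>UNIV. \<Sum>j'\<in>UNIV. \<Sum>k'\<in>UNIV. \<Sum>l'\<in>UNIV.
      antisym_proj (i, k) (i', k') * antisym_proj (j, l) (j', l') * rho2 psi i' j' k' l' i j k l)"

definition SA :: "complex ^ ('a::finite \<times> 'a) ^ ('a \<times> 'a)" where
  "SA = (\<chi> r c. sym_proj r c)"

definition mtrace :: "complex ^ 'n::finite ^ 'n \<Rightarrow> complex" where
  "mtrace M = (\<Sum>r\<in>UNIV. M $ r $ r)"

definition omega_bar :: "complex ^ ('a::finite \<times> 'b::finite) \<Rightarrow> complex ^ ('a \<times> 'a) ^ ('a \<times> 'a)" where
  "omega_bar psi = trB_SB psi + (\<chi> r c. (SA $ r $ c / mtrace (SA :: complex ^ ('a \<times> 'a) ^ ('a \<times> 'a))) * tr_AA_AB psi)"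

definition proj2 :: "complex ^ ('a::finite) \<Rightarrow> complex ^ ('a \<times> 'a) ^ ('a \<times> 'a)" where
  "proj2 phi = (\<chi> r c. phi $ fst r * phi $ snd r * cnj (phi $ fst c * phi $ snd c))"

end

theory Submission
  imports Defs
begin

(* Write m_j for the columns of psi (as vectors in C^dA) and R = sum_j |m_j><m_j|.
   Then tr_B(S_B rho) = (R (x) R) S_A, and averaging |sum_j z_j m_j><sum_j z_j m_j|^(x)2 over
   independent phases z_j in {1, i, -1, -i} yields 2 (R (x) R) S_A - sum_j |m_j><m_j|^(x)2.
   Hence (R (x) R) S_A is a nonnegative combination of operators |phi><phi|^(x)2; so is
   S_A (take m_j = e_j), and tr(A_A A_B rho) is a sum of squared moduli, hence nonnegative.
   Thus omega_bar lies in the convex cone generated by the |phi><phi|^(x)2 with |phi| = 1,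
   all of which have trace 1, while tr omega_bar = tr rho = |psi|^4 = 1. *)

section \<open>Phase averaging\<close>

definition fourth_roots :: "complex set" where
  "fourth_roots = {1, \<i>, -1, -\<i>}"

lemma sum_fourth_roots_power_cnj_power:
  assumes "p \<le> 2" "q \<le> (2::nat)"
  shows "(\<Sum>u\<in>fourth_roots. u ^ p * cnj u ^ q) = (if p = q then 4 else 0)"
proof -
  have distinct: "(1::complex) \<noteq> \<i>" "(1::complex) \<noteq> -1" "(1::complex) \<noteq> -\<i>"
      "\<i> \<noteq> -1" "\<i> \<noteq> -\<i>" "-1 \<noteq> -\<i>"
    by (auto simp: complex_eq_iff)
  have expand: "(\<Sum>u\<in>fourth_roots. g u) = g 1 + g \<i> + g (-1) + g (-\<i>)" for g :: "complex \<Rightarrow> complex"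
    using distinct by (simp add: fourth_roots_def add.assoc)
  have "p = 0 \<or> p = 1 \<or> p = 2" "q = 0 \<or> q = 1 \<or> q = 2"
    using assms by auto
  then show ?thesis
    unfolding expand by (elim disjE) (simp_all add: power2_eq_square)
qed

lemma pair_multiplicity_eq_iff:
  "(\<forall>k. (if k = j then 1 else 0) + (if k = l then 1 else (0::nat)) =
        (if k = j' then 1 else 0) + (if k = l' then 1 else 0))
   \<longleftrightarrow> (j = j' \<and> l = l') \<or> (j = l' \<and> l = j')"
  (is "(\<forall>k. ?p k = ?q k) \<longleftrightarrow> _")
proof
  assume eq: "\<forall>k. ?p k = ?q k"
  show "(j = j' \<and> l = l') \<or> (j = l' \<and> l = j')"
  proof (cases "j = j'")
    case True
    then show ?thesis using eq[rule_format, of l] by (auto split: if_split_asm)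
  next
    case False
    then show ?thesis using eq[rule_format, of j] eq[rule_format, of j']
      by (auto split: if_split_asm)
  qed
qed (auto simp: add.commute)

lemma phase_average:
  fixes j l j' l' :: "'j::finite"
  shows "(\<Sum>z\<in>PiE UNIV (\<lambda>_. fourth_roots). z j * z l * cnj (z j') * cnj (z l')) =
    (if (j = j' \<and> l = l') \<or> (j = l' \<and> l = j') then 4 ^ CARD('j) else 0)"
proof -
  define p where "p k = (if k = j then 1 else 0) + (if k = l then 1 else (0::nat))" for k
  define q where "q k = (if k = j' then 1 else 0) + (if k = l' then 1 else (0::nat))" for k
  have prod_delta: "(\<Prod>k\<in>UNIV. f k ^ (if k = i then 1 else 0)) = f i" for f :: "'j \<Rightarrow> complex" and i
  proof -
    have "(\<Prod>k\<in>UNIV. f k ^ (if k = i then 1 else 0)) = (\<Prod>k\<in>UNIV. if k = i then f k else 1)"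
      by (rule prod.cong) auto
    then show ?thesis by simp
  qed
  have monomial: "(\<Prod>k\<in>UNIV. w k ^ p k * cnj (w k) ^ q k) = w j * w l * cnj (w j') * cnj (w l')"
    for w :: "'j \<Rightarrow> complex"
    unfolding p_def q_def power_add prod.distrib
    using prod_delta[of w] prod_delta[of "\<lambda>k. cnj (w k)"] by (simp add: mult.assoc)
  have "p k \<le> 2" "q k \<le> 2" for k
    unfolding p_def q_def by auto
  then have "(\<Prod>k\<in>UNIV. \<Sum>u\<in>fourth_roots. u ^ p k * cnj u ^ q k) =
      (\<Prod>k\<in>UNIV. if p k = q k then 4 else 0)"
    by (simp add: sum_fourth_roots_power_cnj_power)
  also have "\<dots> = (if \<forall>k. p k = q k then 4 ^ CARD('j) else 0)"
    by (auto simp: prod_zero_iff)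
  finally have "(\<Prod>k\<in>UNIV. \<Sum>u\<in>fourth_roots. u ^ p k * cnj u ^ q k) =
      (if (j = j' \<and> l = l') \<or> (j = l' \<and> l = j') then 4 ^ CARD('j) else 0)"
    unfolding p_def q_def pair_multiplicity_eq_iff .
  moreover have "(\<Prod>k\<in>UNIV. \<Sum>u\<in>fourth_roots. u ^ p k * cnj u ^ q k) =
      (\<Sum>z\<in>PiE UNIV (\<lambda>_. fourth_roots). \<Prod>k\<in>UNIV. z k ^ p k * cnj (z k) ^ q k)"
    by (rule prod_sum_PiE) (auto simp: fourth_roots_def)
  ultimately show ?thesis
    by (simp add: monomial)
qed

definition phase_combination :: "('j::finite \<Rightarrow> complex ^ 'a::finite) \<Rightarrow> ('j \<Rightarrow> complex) \<Rightarrow> complex ^ 'a" where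
  "phase_combination m z = (\<chi> a. \<Sum>j\<in>UNIV. z j * m j $ a)"

lemma sum_sum_delta:
  fixes j l :: "'j::finite"
  shows "(\<Sum>j'\<in>UNIV. \<Sum>l'\<in>UNIV. if j = j' \<and> l = l' then f j' l' else 0) = (f j l :: complex)"
proof -
  have "(\<Sum>j'\<in>UNIV. \<Sum>l'\<in>UNIV. if j = j' \<and> l = l' then f j' l' else 0) =
     (\<Sum>j'\<in>UNIV. if j = j' then (\<Sum>l'\<in>UNIV. if l = l' then f j' l' else 0) else 0)"
    by (rule sum.cong) auto
  then show ?thesis by simp
qed

lemma sum_sum_delta_swap:
  fixes j l :: "'j::finite"
  shows "(\<Sum>j'\<in>UNIV. \<Sum>l'\<in>UNIV. if j = l' \<and> l = j' then f j' l' else 0) = (f l j :: complex)"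
proof -
  have "(\<Sum>j'\<in>UNIV. \<Sum>l'\<in>UNIV. if j = l' \<and> l = j' then f j' l' else 0) =
     (\<Sum>j'\<in>UNIV. if l = j' then (\<Sum>l'\<in>UNIV. if j = l' then f j' l' else 0) else 0)"
    by (rule sum.cong) auto
  then show ?thesis by simp
qed

lemma sum_sum_sum_delta_diagonal:
  fixes j :: "'j::finite"
  shows "(\<Sum>l\<in>UNIV. \<Sum>j'\<in>UNIV. \<Sum>l'\<in>UNIV. if j = j' \<and> l = l' \<and> j = l' \<and> l = j' then f j' l' else 0)
    = (f j j :: complex)"
proof -
  have "(j = j' \<and> l = l' \<and> j = l' \<and> l = j') \<longleftrightarrow> j = l \<and> (j = j' \<and> l = l')" for l j' l' :: 'j
    by auto
  then have "(\<Sum>l\<in>UNIV. \<Sum>j'\<in>UNIV. \<Sum>l'\<in>UNIV. if j = j' \<and> l = l' \<and> j = l' \<and> l = j' then f j' l' else 0) =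
     (\<Sum>l\<in>UNIV. if j = l then (\<Sum>j'\<in>UNIV. \<Sum>l'\<in>UNIV. if j = j' \<and> l = l' then f j' l' else 0) else 0)"
    by (intro sum.cong refl) (simp only: if_if_eq_conj[symmetric], simp)
  then show ?thesis by (simp add: sum_sum_delta)
qed

lemma phase_average_proj2:
  fixes m :: "'j::finite \<Rightarrow> complex ^ 'a::finite"
  shows "(\<Sum>z\<in>PiE UNIV (\<lambda>_. fourth_roots). proj2 (phase_combination m z)) $ (a,b) $ (a',b') =
    4 ^ CARD('j) * ((\<Sum>j\<in>UNIV. \<Sum>l\<in>UNIV. m j $ a * m l $ b * (cnj (m j $ a' * m l $ b') + cnj (m l $ a' * m j $ b')))
       - (\<Sum>j\<in>UNIV. m j $ a * m j $ b * cnj (m j $ a' * m j $ b')))"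
proof -
  let ?M = "\<lambda>j l j' l'. m j $ a * m l $ b * cnj (m j' $ a') * cnj (m l' $ b')"
  have if_disj: "(if A \<or> B then x else 0) =
      (if A then x else 0) + (if B then x else 0) - (if A \<and> B then x else (0::complex))" for A B x
    by auto
  have entry: "proj2 (phase_combination m z) $ (a,b) $ (a',b') =
     (\<Sum>j\<in>UNIV. \<Sum>l\<in>UNIV. \<Sum>j'\<in>UNIV. \<Sum>l'\<in>UNIV. ?M j l j' l' * (z j * z l * cnj (z j') * cnj (z l')))" for z
  proof -
    have "proj2 (phase_combination m z) $ (a,b) $ (a',b') =
       (\<Sum>j\<in>UNIV. z j * m j $ a) * ((\<Sum>l\<in>UNIV. z l * m l $ b) *
       ((\<Sum>j'\<in>UNIV. cnj (z j') * cnj (m j' $ a')) * (\<Sum>l'\<in>UNIV. cnj (z l') * cnj (m l' $ b'))))"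
      by (simp add: proj2_def phase_combination_def cnj_sum mult.assoc)
    also have "\<dots> = (\<Sum>j\<in>UNIV. \<Sum>l\<in>UNIV. \<Sum>j'\<in>UNIV. \<Sum>l'\<in>UNIV. (z j * m j $ a) * ((z l * m l $ b) *
       ((cnj (z j') * cnj (m j' $ a')) * (cnj (z l') * cnj (m l' $ b')))))"
      unfolding sum_distrib_right unfolding sum_distrib_left by (rule refl)
    finally show ?thesis
      by (simp add: mult_ac)
  qed
  have "(\<Sum>z\<in>PiE UNIV (\<lambda>_. fourth_roots). proj2 (phase_combination m z)) $ (a,b) $ (a',b') =
     (\<Sum>j\<in>UNIV. \<Sum>l\<in>UNIV. \<Sum>j'\<in>UNIV. \<Sum>l'\<in>UNIV. ?M j l j' l' *
        (\<Sum>z\<in>PiE UNIV (\<lambda>_. fourth_roots). z j * z l * cnj (z j') * cnj (z l')))"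
    unfolding sum_component entry
    by (simp add: sum_distrib_left sum.swap[of _ "PiE UNIV (\<lambda>_. fourth_roots)"])
  also have "\<dots> = (\<Sum>j\<in>UNIV. \<Sum>l\<in>UNIV. \<Sum>j'\<in>UNIV. \<Sum>l'\<in>UNIV. ?M j l j' l' *
        (if (j = j' \<and> l = l') \<or> (j = l' \<and> l = j') then 4 ^ CARD('j) else 0))"
    by (simp only: phase_average)
  also have "\<dots> = 4 ^ CARD('j) * ((\<Sum>j\<in>UNIV. \<Sum>l\<in>UNIV. ?M j l j l + ?M j l l j) - (\<Sum>j\<in>UNIV. ?M j j j j))"
    unfolding if_disj
    by (simp add: ring_distribs sum.distrib sum_subtractf sum_distrib_left if_distrib[of "\<lambda>x. _ * x"]
        sum_sum_delta sum_sum_delta_swap sum_sum_sum_delta_diagonal mult_ac cong: if_cong)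
  finally show ?thesis
    by (simp add: ring_distribs mult_ac)
qed

text \<open>With R = \<Sum>j |m j><m j|, this is the operator (R \<otimes> R) S.\<close>
definition sym_square :: "('j::finite \<Rightarrow> complex ^ 'a::finite) \<Rightarrow> complex ^ ('a \<times> 'a) ^ ('a \<times> 'a)" where
  "sym_square m = (\<chi> r c. (\<Sum>j\<in>UNIV. \<Sum>l\<in>UNIV. m j $ fst r * m l $ snd r *
      (cnj (m j $ fst c * m l $ snd c) + cnj (m l $ fst c * m j $ snd c))) / 2)"

lemma vec_scaleR_nth: "(c *\<^sub>R v) $ i = complex_of_real c * (v $ i)"
  by (simp only: vector_scaleR_component) (simp add: scaleR_conv_of_real)

lemma matrix_scaleR_nth: "(c *\<^sub>R X) $ i $ j = complex_of_real c * (X $ i $ j)"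
  by (simp only: vector_scaleR_component) (simp add: scaleR_conv_of_real)

lemma sym_square_decomposition:
  fixes m :: "'j::finite \<Rightarrow> complex ^ 'a::finite"
  shows "sym_square m =
    (1 / (2 * 4 ^ CARD('j))) *\<^sub>R (\<Sum>z\<in>PiE UNIV (\<lambda>_. fourth_roots). proj2 (phase_combination m z))
      + (1/2) *\<^sub>R (\<Sum>j\<in>UNIV. proj2 (m j))"
proof -
  have "sym_square m $ (a,b) $ (a',b') =
    ((1 / (2 * 4 ^ CARD('j))) *\<^sub>R (\<Sum>z\<in>PiE UNIV (\<lambda>_. fourth_roots). proj2 (phase_combination m z))
      + (1/2) *\<^sub>R (\<Sum>j\<in>UNIV. proj2 (m j))) $ (a,b) $ (a',b')" for a b a' b'
    unfolding vector_add_component matrix_scaleR_nth phase_average_proj2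
    by (simp add: sym_square_def proj2_def sum_component) (simp add: field_simps)
  then show ?thesis
    unfolding vec_eq_iff split_paired_All by blast
qed

section \<open>The convex cone of product states\<close>

abbreviation product_projectors :: "(complex ^ ('a::finite \<times> 'a) ^ ('a \<times> 'a)) set" where
  "product_projectors \<equiv> {proj2 phi | phi :: complex ^ 'a. norm phi = 1}"

lemma mtrace_add: "mtrace (X + Y) = mtrace X + mtrace Y"
  by (simp add: mtrace_def sum.distrib)

lemma mtrace_scaleR: "mtrace (c *\<^sub>R X) = c *\<^sub>R mtrace X"
  by (simp add: mtrace_def scaleR_sum_right)

lemma linear_mtrace: "linear mtrace"
  by (rule linearI) (simp_all add: mtrace_add mtrace_scaleR)

lemma norm_vec_square: "norm (v :: complex ^ 'n::finite) ^ 2 = (\<Sum>a\<in>UNIV. cmod (v $ a) ^ 2)"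
  by (simp add: norm_vec_def L2_set_def sum_nonneg)

lemma mtrace_proj2: "mtrace (proj2 (v :: complex ^ 'a::finite)) = of_real (norm v ^ 4)"
proof -
  have "mtrace (proj2 v) = (\<Sum>r\<in>UNIV. of_real (cmod (v $ fst r) ^ 2) * of_real (cmod (v $ snd r) ^ 2))"
    unfolding mtrace_def proj2_def
    by (rule sum.cong[OF refl]) (simp only: complex_norm_square, simp add: mult_ac)
  also have "\<dots> = (\<Sum>a\<in>UNIV. of_real (cmod (v $ a) ^ 2)) * (\<Sum>b\<in>UNIV. of_real (cmod (v $ b) ^ 2))"
    by (simp add: sum_product sum.cartesian_product split_beta)
  also have "\<dots> = of_real (norm v ^ 2 * norm v ^ 2)"
    by (simp only: norm_vec_square of_real_sum of_real_mult)
  finally show ?thesis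
    by (simp add: eval_nat_numeral mult_ac)
qed

lemma proj2_scaleR: "proj2 (c *\<^sub>R v) = (c ^ 4) *\<^sub>R proj2 v"
  by (simp add: vec_eq_iff proj2_def matrix_scaleR_nth vec_scaleR_nth mult_ac eval_nat_numeral)

lemma proj2_in_convex_cone_hull: "proj2 v \<in> convex_cone hull product_projectors"
proof (cases "v = 0")
  case True
  then have "proj2 v = 0"
    by (simp add: vec_eq_iff proj2_def)
  then show ?thesis
    by (simp add: convex_cone_hull_contains_0)
next
  case False
  then have "proj2 (sgn v) \<in> product_projectors"
    by (auto simp: norm_sgn)
  moreover have "proj2 v = (norm v ^ 4) *\<^sub>R proj2 (sgn v)"
    using False by (simp add: sgn_div_norm flip: proj2_scaleR)
  ultimately show ?thesis
    by (simp add: convex_cone_hull_mul hull_inc)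
qed

lemma convex_cone_hull_sum:
  assumes "finite A" "\<And>x. x \<in> A \<Longrightarrow> f x \<in> convex_cone hull S"
  shows "sum f A \<in> convex_cone hull S"
  using assms by (induction A rule: finite_induct)
    (auto intro: convex_cone_hull_add convex_cone_hull_contains_0)

lemma sym_square_in_convex_cone_hull: "sym_square m \<in> convex_cone hull product_projectors"
  unfolding sym_square_decomposition
  by (intro convex_cone_hull_add convex_cone_hull_mul convex_cone_hull_sum proj2_in_convex_cone_hull)
    (auto intro: finite_PiE simp: fourth_roots_def)

lemma mtrace_convex_hull_product_projectors:
  assumes "X \<in> convex hull product_projectors"
  shows "mtrace X = 1"
proof -
  have "convex hull product_projectors \<subseteq> mtrace -` {1}"
    by (intro hull_minimal convex_linear_vimage linear_mtrace convex_singleton)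
      (auto simp: mtrace_proj2)
  then show ?thesis
    using assms by blast
qed

lemma mem_convex_hull_if_mtrace_eq_1:
  assumes "X \<in> convex_cone hull product_projectors" "mtrace X = 1"
  shows "X \<in> convex hull product_projectors"
proof -
  have "X \<noteq> 0"
    using assms(2) by (auto simp: mtrace_def)
  then obtain c Y where X: "X = c *\<^sub>R Y" and Y: "Y \<in> convex hull product_projectors"
    using assms(1) unfolding convex_cone_hull_convex_hull by blast
  have "c = 1"
    using assms(2) unfolding X mtrace_scaleR mtrace_convex_hull_product_projectors[OF Y]
    by (simp add: scaleR_conv_of_real)
  then show ?thesis
    using X Y by simp
qed

section \<open>The operators built from \<psi>\<close>

lemma sum_pairs: "(\<Sum>r\<in>(UNIV::('a::finite \<times> 'b::finite) set). f r) = (\<Sum>a\<in>UNIV. \<Sum>b\<in>UNIV. f (a,b))"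
  by (simp add: sum.cartesian_product split_beta)

lemma sum_sum_sym_proj:
  fixes a c :: "'x::finite"
  shows "(\<Sum>a'\<in>UNIV. \<Sum>c'\<in>UNIV. sym_proj (a,c) (a',c') * g a' c') = (g a c + g c a) / 2"
proof -
  have entry: "sym_proj (a,c) (a',c') * x =
      ((if a = a' \<and> c = c' then x else 0) + (if a = c' \<and> c = a' then x else 0)) / 2" for a' c' x
  proof -
    have "((if P then 1 else 0) + (if Q then 1 else 0)) / 2 * x =
        ((if P then x else 0) + (if Q then x else 0)) / (2::complex)" for P Q
      by (cases P; cases Q) simp_all
    then show ?thesis
      unfolding sym_proj_def prod.inject fst_conv snd_conv .
  qed
  show ?thesis
    unfolding entry by (simp only: sum_divide_distrib[symmetric] sum.distrib sum_sum_delta sum_sum_delta_swap)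
qed

lemma sum_sum_antisym_proj:
  fixes a c :: "'x::finite"
  shows "(\<Sum>a'\<in>UNIV. \<Sum>c'\<in>UNIV. antisym_proj (a,c) (a',c') * g a' c') = (g a c - g c a) / 2"
proof -
  have entry: "antisym_proj (a,c) (a',c') * x =
      ((if a = a' \<and> c = c' then x else 0) - (if a = c' \<and> c = a' then x else 0)) / 2" for a' c' x
  proof -
    have "((if P then 1 else 0) - (if Q then 1 else 0)) / 2 * x =
        ((if P then x else 0) - (if Q then x else 0)) / (2::complex)" for P Q
      by (cases P; cases Q) simp_all
    then show ?thesis
      unfolding antisym_proj_def prod.inject fst_conv snd_conv .
  qed
  show ?thesis
    unfolding entry by (simp only: sum_divide_distrib[symmetric] sum_subtractf sum_sum_delta sum_sum_delta_swap)
qed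

lemma trB_SB_nth:
  fixes psi :: "complex ^ ('a::finite \<times> 'b::finite)"
  shows "trB_SB psi $ (a,b) $ (a',b') =
    ((\<Sum>j\<in>UNIV. \<Sum>l\<in>UNIV. psi $ (a,j) * psi $ (b,l) * cnj (psi $ (a',j) * psi $ (b',l))) +
     (\<Sum>j\<in>UNIV. \<Sum>l\<in>UNIV. psi $ (a,l) * psi $ (b,j) * cnj (psi $ (a',j) * psi $ (b',l)))) / 2"
  unfolding trB_SB_def vec_lambda_beta fst_conv snd_conv sum_sum_sym_proj rho2_def psi2_def
  by (simp add: sum.distrib add_divide_distrib sum_divide_distrib)

lemma trB_SB_eq_sym_square: "trB_SB psi = sym_square (\<lambda>j. \<chi> a. psi $ (a,j))"
proof -
  have "trB_SB psi $ (a,b) $ (a',b') = sym_square (\<lambda>j. \<chi> a. psi $ (a,j)) $ (a,b) $ (a',b')" for a b a' b'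
  proof -
    have "(\<Sum>j\<in>UNIV. \<Sum>l\<in>UNIV. psi $ (a,l) * psi $ (b,j) * cnj (psi $ (a',j) * psi $ (b',l))) =
        (\<Sum>j\<in>UNIV. \<Sum>l\<in>UNIV. psi $ (a,j) * psi $ (b,l) * cnj (psi $ (a',l) * psi $ (b',j)))"
      by (rule sum.swap)
    then show ?thesis
      unfolding trB_SB_nth by (simp add: sym_square_def distrib_left sum.distrib add_divide_distrib)
  qed
  then show ?thesis
    unfolding vec_eq_iff split_paired_All by blast
qed

lemma SA_eq_sym_square: "SA = sym_square (\<lambda>k. axis k 1)"
proof -
  have indicator: "axis k 1 $ i = of_bool (i = k)" for k i :: 'a
    by (simp add: axis_def)
  have select: "of_bool P * of_bool Q * x = (if P \<and> Q then x else (0::complex))" for P Q x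
    by (cases P; cases Q) simp_all
  have cnj_indicator: "cnj (of_bool P * of_bool Q) = (of_bool (P \<and> Q) :: complex)" for P Q
    by (cases P; cases Q) simp_all
  have "sym_square (\<lambda>k. axis k 1) $ (a,b) $ (a',b') = SA $ (a,b) $ (a',b')" for a b a' b' :: 'a
  proof -
    have "sym_square (\<lambda>k. axis k 1) $ (a,b) $ (a',b') =
        (\<Sum>j\<in>UNIV. \<Sum>l\<in>UNIV. if a = j \<and> b = l then
          of_bool (a' = j \<and> b' = l) + of_bool (a' = l \<and> b' = j) else 0) / 2"
      unfolding sym_square_def vec_lambda_beta fst_conv snd_conv indicator select cnj_indicator ..
    also have "\<dots> = (of_bool (a' = a \<and> b' = b) + of_bool (a' = b \<and> b' = a)) / 2"
      by (simp only: sum_sum_delta)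
    also have "\<dots> = SA $ (a,b) $ (a',b')"
    proof -
      have swap: "(a' = a \<and> b' = b) = ((a, b) = (a', b'))" "(a' = b \<and> b' = a) = ((a, b) = (b', a'))"
        by auto
      show ?thesis
        unfolding SA_def sym_proj_def vec_lambda_beta fst_conv snd_conv of_bool_def swap ..
    qed
    finally show ?thesis .
  qed
  then show ?thesis
    unfolding vec_eq_iff split_paired_All by simp
qed
lemma mtrace_SA: "mtrace (SA :: complex ^ ('a::finite \<times> 'a) ^ ('a \<times> 'a)) = of_nat (CARD('a) * Suc CARD('a)) / 2"
  unfolding mtrace_def SA_def sum_pairs
  by (simp add: sym_proj_def sum.distrib add_divide_distrib eq_commute[of "_::'a"] flip: sum_divide_distrib)
    (simp add: algebra_simps)

lemma sum_antisym_proj_antisym_proj: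
  fixes i k :: "'a::finite" and j l :: "'b::finite"
  shows "(\<Sum>i'\<in>UNIV. \<Sum>j'\<in>UNIV. \<Sum>k'\<in>UNIV. \<Sum>l'\<in>UNIV.
      antisym_proj (i, k) (i', k') * antisym_proj (j, l) (j', l') * f i' j' k' l') =
    (f i j k l - f k j i l - f i l k j + f k l i j) / 4"
proof -
  have "(\<Sum>i'\<in>UNIV. \<Sum>j'\<in>UNIV. \<Sum>k'\<in>UNIV. \<Sum>l'\<in>UNIV.
      antisym_proj (i, k) (i', k') * antisym_proj (j, l) (j', l') * f i' j' k' l') =
      (\<Sum>i'\<in>UNIV. \<Sum>k'\<in>UNIV. antisym_proj (i, k) (i', k') *
        (\<Sum>j'\<in>UNIV. \<Sum>l'\<in>UNIV. antisym_proj (j, l) (j', l') * f i' j' k' l'))"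
    by (rule sum.cong[OF refl], subst sum.swap, rule sum.cong[OF refl])
      (simp only: sum_distrib_left mult.assoc)
  also have "\<dots> = (\<Sum>i'\<in>UNIV. \<Sum>k'\<in>UNIV. antisym_proj (i, k) (i', k') * ((f i' j k' l - f i' l k' j) / 2))"
    by (simp only: sum_sum_antisym_proj)
  also have "\<dots> = ((f i j k l - f i l k j) / 2 - (f k j i l - f k l i j) / 2) / 2"
    by (rule sum_sum_antisym_proj)
  also have "\<dots> = (f i j k l - f k j i l - f i l k j + f k l i j) / 4"
    by (simp add: field_simps)
  finally show ?thesis .
qed

lemma tr_AA_AB_eq:
  fixes psi :: "complex ^ ('a::finite \<times> 'b::finite)"
  shows "tr_AA_AB psi = (\<Sum>i\<in>UNIV. \<Sum>j\<in>UNIV. \<Sum>k\<in>UNIV. \<Sum>l\<in>UNIV.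
     (psi $ (i,j) * psi $ (k,l) - psi $ (i,l) * psi $ (k,j)) * cnj (psi $ (i,j) * psi $ (k,l))) / 2"
proof -
  have "tr_AA_AB psi = (\<Sum>i\<in>UNIV. \<Sum>j\<in>UNIV. \<Sum>k\<in>UNIV. \<Sum>l\<in>UNIV.
     (psi $ (i,j) * psi $ (k,l) - psi $ (k,j) * psi $ (i,l) - psi $ (i,l) * psi $ (k,j) + psi $ (k,l) * psi $ (i,j))
       * cnj (psi $ (i,j) * psi $ (k,l)) / 4)"
    unfolding tr_AA_AB_def rho2_def psi2_def sum_antisym_proj_antisym_proj
    by (rule sum.cong[OF refl])+ (simp add: algebra_simps)
  also have "\<dots> = (\<Sum>i\<in>UNIV. \<Sum>j\<in>UNIV. \<Sum>k\<in>UNIV. \<Sum>l\<in>UNIV.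
     (psi $ (i,j) * psi $ (k,l) - psi $ (i,l) * psi $ (k,j)) * cnj (psi $ (i,j) * psi $ (k,l)) / 2)"
    by (rule sum.cong[OF refl])+ (simp add: field_simps)
  finally show ?thesis
    by (simp only: sum_divide_distrib)
qed

text \<open>Symmetrising the summand of tr_AA_AB_eq under j \<leftrightarrow> l turns it into a sum of
  squared moduli.\<close>
lemma tr_AA_AB_eq_sum_cmod_square:
  fixes psi :: "complex ^ ('a::finite \<times> 'b::finite)"
  shows "tr_AA_AB psi = of_real ((\<Sum>i\<in>UNIV. \<Sum>j\<in>UNIV. \<Sum>k\<in>UNIV. \<Sum>l\<in>UNIV.
      (cmod (psi $ (i,j) * psi $ (k,l) - psi $ (i,l) * psi $ (k,j)))^2) / 4)"
proof -
  define X where "X i j k l = psi $ (i,j) * psi $ (k,l)" for i j k l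
  define T where "T = (\<Sum>i\<in>UNIV. \<Sum>j\<in>UNIV. \<Sum>k\<in>UNIV. \<Sum>l\<in>UNIV. (X i j k l - X i l k j) * cnj (X i j k l))"
  have swapped: "T = (\<Sum>i\<in>UNIV. \<Sum>j\<in>UNIV. \<Sum>k\<in>UNIV. \<Sum>l\<in>UNIV. (X i l k j - X i j k l) * cnj (X i l k j))"
  proof -
    have reverse: "(\<Sum>j\<in>UNIV. \<Sum>k\<in>UNIV. \<Sum>l\<in>UNIV. F j k l) = (\<Sum>j\<in>UNIV. \<Sum>k\<in>UNIV. \<Sum>l\<in>UNIV. F l k j)"
      for F :: "'b \<Rightarrow> 'a \<Rightarrow> 'b \<Rightarrow> complex"
    proof -
      have "(\<Sum>j\<in>UNIV. \<Sum>k\<in>UNIV. \<Sum>l\<in>UNIV. F j k l) = (\<Sum>j\<in>UNIV. \<Sum>l\<in>UNIV. \<Sum>k\<in>UNIV. F j k l)"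
        by (rule sum.cong[OF refl], rule sum.swap)
      also have "\<dots> = (\<Sum>l\<in>UNIV. \<Sum>j\<in>UNIV. \<Sum>k\<in>UNIV. F j k l)"
        by (rule sum.swap)
      also have "\<dots> = (\<Sum>l\<in>UNIV. \<Sum>k\<in>UNIV. \<Sum>j\<in>UNIV. F j k l)"
        by (rule sum.cong[OF refl], rule sum.swap)
      finally show ?thesis .
    qed
    show ?thesis
      unfolding T_def by (rule sum.cong[OF refl]) (rule reverse)
  qed
  have "2 * T = (\<Sum>i\<in>UNIV. \<Sum>j\<in>UNIV. \<Sum>k\<in>UNIV. \<Sum>l\<in>UNIV. (X i j k l - X i l k j) * cnj (X i j k l - X i l k j))"
    unfolding mult_2
    by (subst (2) swapped) (simp add: T_def algebra_simps flip: sum.distrib)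
  also have "\<dots> = of_real (\<Sum>i\<in>UNIV. \<Sum>j\<in>UNIV. \<Sum>k\<in>UNIV. \<Sum>l\<in>UNIV. (cmod (X i j k l - X i l k j))^2)"
    by (simp only: of_real_sum complex_norm_square)
  finally show ?thesis
    unfolding tr_AA_AB_eq X_def[symmetric] T_def[symmetric] by simp
qed

lemma sum_tensor_square_eq_norm_power_4:
  fixes psi :: "complex ^ ('a::finite \<times> 'b::finite)"
  shows "(\<Sum>a\<in>UNIV. \<Sum>b\<in>UNIV. \<Sum>j\<in>UNIV. \<Sum>l\<in>UNIV. psi $ (a,j) * psi $ (b,l) * cnj (psi $ (a,j) * psi $ (b,l)))
    = of_real (norm psi ^ 4)"
proof -
  define p where "p a j = psi $ (a,j) * cnj (psi $ (a,j))" for a j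
  have norm_square: "(\<Sum>a\<in>UNIV. \<Sum>j\<in>UNIV. p a j) = of_real (norm psi ^ 2)"
    unfolding norm_vec_square of_real_sum complex_norm_square p_def sum_pairs ..
  have "(\<Sum>a\<in>UNIV. \<Sum>b\<in>UNIV. \<Sum>j\<in>UNIV. \<Sum>l\<in>UNIV. psi $ (a,j) * psi $ (b,l) * cnj (psi $ (a,j) * psi $ (b,l)))
     = (\<Sum>a\<in>UNIV. \<Sum>j\<in>UNIV. \<Sum>b\<in>UNIV. \<Sum>l\<in>UNIV. p a j * p b l)"
    unfolding p_def by (rule sum.cong[OF refl], subst sum.swap, simp add: mult_ac)
  also have "\<dots> = (\<Sum>a\<in>UNIV. \<Sum>j\<in>UNIV. p a j) * (\<Sum>b\<in>UNIV. \<Sum>l\<in>UNIV. p b l)"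
    unfolding sum_distrib_right unfolding sum_distrib_left ..
  finally show ?thesis
    unfolding norm_square by (simp flip: of_real_mult power_add)
qed

lemma mtrace_trB_SB_add_tr_AA_AB:
  fixes psi :: "complex ^ ('a::finite \<times> 'b::finite)"
  shows "mtrace (trB_SB psi) + tr_AA_AB psi = of_real (norm psi ^ 4)"
proof -
  define F where "F a b j l = psi $ (a,j) * psi $ (b,l) * cnj (psi $ (a,j) * psi $ (b,l))" for a b j l
  define H where "H a b j l = psi $ (a,l) * psi $ (b,j) * cnj (psi $ (a,j) * psi $ (b,l))" for a b j l
  have mtrace_pairs: "mtrace M = (\<Sum>a\<in>UNIV. \<Sum>b\<in>UNIV. M $ (a,b) $ (a,b))" for M :: "complex ^ ('a \<times> 'a) ^ ('a \<times> 'a)"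
    unfolding mtrace_def sum_pairs ..
  have reorder: "(\<Sum>a\<in>UNIV. \<Sum>j\<in>UNIV. \<Sum>b\<in>UNIV. \<Sum>l\<in>UNIV. G a b j l) =
      (\<Sum>a\<in>UNIV. \<Sum>b\<in>UNIV. \<Sum>j\<in>UNIV. \<Sum>l\<in>UNIV. G a b j l)" for G :: "'a \<Rightarrow> 'a \<Rightarrow> 'b \<Rightarrow> 'b \<Rightarrow> complex"
    by (rule sum.cong[OF refl], rule sum.swap)
  have trace: "mtrace (trB_SB psi) = ((\<Sum>a\<in>UNIV. \<Sum>b\<in>UNIV. \<Sum>j\<in>UNIV. \<Sum>l\<in>UNIV. F a b j l) +
      (\<Sum>a\<in>UNIV. \<Sum>b\<in>UNIV. \<Sum>j\<in>UNIV. \<Sum>l\<in>UNIV. H a b j l)) / 2"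
    unfolding mtrace_pairs trB_SB_nth F_def H_def
    by (simp add: sum.distrib add_divide_distrib sum_divide_distrib)
  have tr: "tr_AA_AB psi = ((\<Sum>a\<in>UNIV. \<Sum>b\<in>UNIV. \<Sum>j\<in>UNIV. \<Sum>l\<in>UNIV. F a b j l) -
      (\<Sum>a\<in>UNIV. \<Sum>b\<in>UNIV. \<Sum>j\<in>UNIV. \<Sum>l\<in>UNIV. H a b j l)) / 2"
    unfolding tr_AA_AB_eq F_def H_def reorder[symmetric]
    by (simp add: sum_subtractf left_diff_distrib)
  have sum_F: "(\<Sum>a\<in>UNIV. \<Sum>b\<in>UNIV. \<Sum>j\<in>UNIV. \<Sum>l\<in>UNIV. F a b j l) = of_real (norm psi ^ 4)"
    unfolding F_def by (rule sum_tensor_square_eq_norm_power_4)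
  show ?thesis
    unfolding trace tr sum_F by (simp add: field_simps)
qed

lemma omega_bar_in_convex_cone_hull:
  fixes psi :: "complex ^ ('a::finite \<times> 'b::finite)"
  shows "omega_bar psi \<in> convex_cone hull product_projectors"
proof -
  define \<tau> where "\<tau> = (\<Sum>i\<in>UNIV. \<Sum>j\<in>UNIV. \<Sum>k\<in>UNIV. \<Sum>l\<in>UNIV.
      (cmod (psi $ (i,j) * psi $ (k,l) - psi $ (i,l) * psi $ (k,j)))^2) / 4"
  define s where "s = real (CARD('a) * Suc CARD('a)) / 2"
  have tr: "tr_AA_AB psi = of_real \<tau>"
    unfolding tr_AA_AB_eq_sum_cmod_square \<tau>_def ..
  have trace: "mtrace (SA :: complex ^ ('a \<times> 'a) ^ ('a \<times> 'a)) = of_real s"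
    by (simp add: mtrace_SA s_def)
  have "(\<chi> r c. SA $ r $ c / of_real s * of_real \<tau>) = (\<tau> / s) *\<^sub>R SA"
    unfolding vec_eq_iff matrix_scaleR_nth vec_lambda_beta by (simp add: of_real_divide mult.commute)
  then have "omega_bar psi = trB_SB psi + (\<tau> / s) *\<^sub>R SA"
    unfolding omega_bar_def tr trace by simp
  moreover have "\<tau> / s \<ge> 0"
    unfolding \<tau>_def s_def by (intro divide_nonneg_nonneg sum_nonneg) auto
  ultimately show ?thesis
    unfolding trB_SB_eq_sym_square SA_eq_sym_square
    by (simp add: convex_cone_hull_add convex_cone_hull_mul sym_square_in_convex_cone_hull)
qed

lemma mtrace_omega_bar:
  fixes psi :: "complex ^ ('a::finite \<times> 'b::finite)"
  shows "mtrace (omega_bar psi) = of_real (norm psi ^ 4)"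
proof -
  let ?SA = "SA :: complex ^ ('a \<times> 'a) ^ ('a \<times> 'a)"
  have nonzero: "mtrace ?SA \<noteq> 0"
    unfolding mtrace_SA divide_eq_0_iff of_nat_eq_0_iff
    using finite_UNIV_card_ge_0[where 'a = 'a] by simp
  have "mtrace (\<chi> r c. ?SA $ r $ c / mtrace ?SA * tr_AA_AB psi) = mtrace ?SA * tr_AA_AB psi / mtrace ?SA"
    unfolding mtrace_def vec_lambda_beta
    by (simp only: times_divide_eq_left sum_divide_distrib[symmetric] sum_distrib_right[symmetric])
  also have "\<dots> = tr_AA_AB psi"
    using nonzero by (rule nonzero_mult_div_cancel_left)
  finally show ?thesis
    unfolding omega_bar_def mtrace_add mtrace_trB_SB_add_tr_AA_AB[symmetric] by simp
qed

theorem mainTheorem10: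
  fixes psi :: "complex ^ ('a::finite \<times> 'b::finite)"
  assumes "norm psi = 1"
  shows "omega_bar psi \<in> convex hull {proj2 phi | phi :: complex ^ 'a. norm phi = 1}"
proof (rule mem_convex_hull_if_mtrace_eq_1)
  show "omega_bar psi \<in> convex_cone hull product_projectors"
    by (rule omega_bar_in_convex_cone_hull)
  show "mtrace (omega_bar psi) = 1"
    using assms by (simp add: mtrace_omega_bar)
qed

end
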